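(* Let $\rho>0$. A probability measure $\nu$ on $(\mathcal{P}^{loc},\mathcal{F})$ is invariant for the $\mathbb{R}^+$-partitioning process $(\Pi^\rho_t;t\ge0)$ if and only if for every finite subset $z$ of $\mathbb{R}^+$, $\nu\circ\mathrm{Rest}_z^{-1}$ is invariant for $(\mathrm{Rest}_z(\Pi^\rho_t);t\ge0)$.
   Context: $\mathcal{P}^{loc}$ is the set of right-continuous (segments, i.e. maximal connected subsets of blocks, are left-closed right-open intervals) and locally finite (finitely many segments meet any compact set) partitions of $\mathbb{R}^+$; for finite $z$, $\mathrm{Rest}_z(\pi)$ is the partition of $z$ induced by $\pi$; $\mathcal{F}$ is the $\sigma$-field generated by the sets $\{\tilde\pi:\mathrm{Rest}_z(\tilde\pi)=\pi\}$ for finite $z\subset\mathbb{R}^+$ and partitions $\pi$ of $z$. For finite $z=\{z_0<\dots<z_n\}$, the ARG $\Gamma^{\rho,z}$ is the Markov chain on partitions of $z$ in which each pair of blocks merges at rate $1$, and each block $\{z_{i_1}<\dots<z_{i_k}\}$ splits into $\{z_{i_1},\dots,z_{i_j}\}$ and $\{z_{i_{j+1}},\dots,z_{i_k}\}$ at rate $\rho(z_{i_{j+1}}-z_{i_j})$. The $\mathbb{R}^+$-partitioning process $(\Pi^\rho_t)$ is the càdlàg process on $(\mathcal{P}^{loc},\mathcal{F})$ such that for each finite $z$, $(\mathrm{Rest}_z(\Pi^\rho_t))$ is the ARG $\Gamma^{\rho,z}$ started from $\mathrm{Rest}_z(\Pi^\rho_0)$. Invariance of $\nu$ means that if the initial state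 has law $\nu$ then the state at each time $t$ has law $\nu$. *)

theory Defs
  imports "HOL-Probability.Probability" "HOL-Library.Disjoint_Sets"
begin

text \<open>Partitions are represented as sets of blocks (type real set set).
  The half-line R+ is taken to be {0..}.\<close>

definition segment :: "real set set \<Rightarrow> real set \<Rightarrow> bool" where
  "segment \<pi> S \<longleftrightarrow> (\<exists>B\<in>\<pi>. S \<subseteq> B \<and> S \<noteq> {} \<and> connected S \<and>
      (\<forall>T. S \<subseteq> T \<and> T \<subseteq> B \<and> connected T \<longrightarrow> T = S))"

definition Ploc :: "real set set set" where
  "Ploc = {\<pi>. partition_on {0..} \<pi>
     \<and> (\<forall>S. segment \<pi> S \<longrightarrow> (\<exists>a b. S = {a..<b}) \<or> (\<exists>a. S = {a..}))
     \<and> (\<forall>K. compact K \<longrightarrow> finite {S. segment \<pi> S \<and> S \<inter> K \<noteq> {}})}"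

definition Rest :: "real set \<Rightarrow> real set set \<Rightarrow> real set set" where
  "Rest z \<pi> = (\<lambda>B. B \<inter> z) ` \<pi> - {{}}"

definition Parts :: "real set \<Rightarrow> real set set set" where
  "Parts z = {p. partition_on z p}"

definition Ploc_M :: "real set set measure" where
  "Ploc_M = sigma Ploc
     {{p \<in> Ploc. Rest z p = q} | z q. finite z \<and> z \<subseteq> {0..} \<and> partition_on z q}"

text \<open>Transitions of the ancestral recombination graph (ARG).\<close>

definition merge_of :: "real set set \<Rightarrow> real set set \<Rightarrow> bool" where
  "merge_of p q \<longleftrightarrow> (\<exists>A\<in>p. \<exists>B\<in>p. A \<noteq> B \<and> q = insert (A \<union> B) (p - {A, B}))"

definition split_at :: "real set set \<Rightarrow> real set \<Rightarrow> real \<Rightarrow> real \<Rightarrow> real set set \<Rightarrow> bool" where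
  "split_at p C a b q \<longleftrightarrow> C \<in> p \<and> a \<in> C \<and> b \<in> C \<and> a < b \<and> (\<forall>x\<in>C. \<not> (a < x \<and> x < b))
     \<and> q = insert {x\<in>C. x \<le> a} (insert {x\<in>C. b \<le> x} (p - {C}))"

definition ARG_rate :: "real \<Rightarrow> real set set \<Rightarrow> real set set \<Rightarrow> real" where
  "ARG_rate \<rho> p q =
     (if merge_of p q then 1
      else if (\<exists>C a b. split_at p C a b q)
        then \<rho> * (THE d. \<exists>C a b. split_at p C a b q \<and> d = b - a)
      else 0)"

definition ARG_gen :: "real \<Rightarrow> real set \<Rightarrow> real set set \<Rightarrow> real set set \<Rightarrow> real" where
  "ARG_gen \<rho> z p q =
     (if p = q then - (\<Sum>q'\<in>Parts z - {p}. ARG_rate \<rho> p q') else ARG_rate \<rho> p q)"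

fun gen_pow :: "'s set \<Rightarrow> ('s \<Rightarrow> 's \<Rightarrow> real) \<Rightarrow> nat \<Rightarrow> 's \<Rightarrow> 's \<Rightarrow> real" where
  "gen_pow S Q 0 x y = (if x = y then 1 else 0)"
| "gen_pow S Q (Suc n) x y = (\<Sum>w\<in>S. gen_pow S Q n x w * Q w y)"

definition ctmc_trans :: "'s set \<Rightarrow> ('s \<Rightarrow> 's \<Rightarrow> real) \<Rightarrow> real \<Rightarrow> 's \<Rightarrow> 's \<Rightarrow> real" where
  "ctmc_trans S Q t x y = (\<Sum>n. t ^ n / fact n * gen_pow S Q n x y)"

definition ARG_P :: "real \<Rightarrow> real set \<Rightarrow> real \<Rightarrow> real set set \<Rightarrow> real set set \<Rightarrow> real" where
  "ARG_P \<rho> z t = ctmc_trans (Parts z) (ARG_gen \<rho> z) t"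

definition ARG_invariant :: "real \<Rightarrow> real set \<Rightarrow> real set set measure \<Rightarrow> bool" where
  "ARG_invariant \<rho> z \<mu> \<longleftrightarrow>
     (\<forall>t\<ge>0. \<forall>q\<in>Parts z. (\<Sum>p\<in>Parts z. measure \<mu> {p} * ARG_P \<rho> z t p q) = measure \<mu> {q})"

definition is_partitioning_process ::
  "real \<Rightarrow> 'a measure \<Rightarrow> (real \<Rightarrow> 'a \<Rightarrow> real set set) \<Rightarrow> bool" where
  "is_partitioning_process \<rho> M X \<longleftrightarrow>
     prob_space M
   \<and> (\<forall>t\<ge>0. X t \<in> measurable M Ploc_M)
   \<and> (\<forall>\<omega>\<in>space M. \<forall>z. finite z \<and> z \<subseteq> {0..} \<longrightarrow>
        (\<forall>t\<ge>0. \<exists>e>0. \<forall>s. t \<le> s \<and> s < t + e \<longrightarrow> Rest z (X s \<omega>) = Rest z (X t \<omega>))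
      \<and> (\<forall>t>0. \<exists>e>0. \<exists>q. \<forall>s. t - e < s \<and> s < t \<longrightarrow> Rest z (X s \<omega>) = q))
   \<and> (\<forall>z. finite z \<and> z \<subseteq> {0..} \<longrightarrow>
        (\<forall>n (ts :: nat \<Rightarrow> real) (xs :: nat \<Rightarrow> real set set).
           ts 0 = 0 \<and> (\<forall>k<n. ts k \<le> ts (Suc k)) \<and> (\<forall>k\<le>n. xs k \<in> Parts z) \<longrightarrow>
           measure M {\<omega> \<in> space M. \<forall>k\<le>n. Rest z (X (ts k) \<omega>) = xs k}
             = measure M {\<omega> \<in> space M. Rest z (X 0 \<omega>) = xs 0}
               * (\<Prod>k<n. ARG_P \<rho> z (ts (Suc k) - ts k) (xs k) (xs (Suc k)))))"

end

theory Submission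
  imports Defs
begin

text \<open>
  The law at time t of the partition restricted to a finite set z is obtained from the law at
  time 0 restricted to z by applying the ARG transition matrix on z (the two-time case of the
  finite-dimensional distributions). Hence invariance of every restricted law says exactly that
  the law at time t agrees with \<nu> on all cylinder sets {Rest z = q}. The cylinder sets
  {Rest z \<in> A} are closed under intersection (restrict to the union of the two sets of sites) and
  generate the \<sigma>-field, so finite measures agreeing on them are equal.
\<close>

lemma partition_on_Rest:
  assumes "partition_on S \<pi>" "z \<subseteq> S"
  shows "partition_on z (Rest z \<pi>)"
proof -
  have "partition_on z ((\<inter>) z ` \<pi> - {{}})"
    using partition_on_restrict[OF assms(1), of z] assms(2) by (simp add: Int_absorb2)
  moreover have "(\<inter>) z ` \<pi> = (\<lambda>B. B \<inter> z) ` \<pi>" by (auto simp: Int_commute)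
  ultimately show ?thesis by (simp add: Rest_def)
qed

lemma Rest_in_Parts: "\<pi> \<in> Ploc \<Longrightarrow> z \<subseteq> {0..} \<Longrightarrow> Rest z \<pi> \<in> Parts z"
  using partition_on_Rest[of "{0..}" \<pi> z] by (simp add: Ploc_def Parts_def)

lemma finite_Parts: "finite z \<Longrightarrow> finite (Parts z)"
  unfolding Parts_def by (rule finitely_many_partition_on)

lemma Rest_Rest:
  assumes "z1 \<subseteq> z2"
  shows "Rest z1 (Rest z2 \<pi>) = Rest z1 \<pi>"
proof -
  have "Rest z1 (Rest z2 \<pi>) = (\<lambda>C. C \<inter> z1) ` ((\<lambda>B. B \<inter> z2) ` \<pi>) - {{}}"
    unfolding Rest_def by auto
  also have "(\<lambda>C. C \<inter> z1) ` ((\<lambda>B. B \<inter> z2) ` \<pi>) = (\<lambda>B. B \<inter> z1) ` \<pi>"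
    unfolding image_image using assms by (intro image_cong) auto
  finally show ?thesis unfolding Rest_def .
qed

definition cylinder :: "real set \<Rightarrow> real set set \<Rightarrow> real set set set" where
  "cylinder z q = {\<pi> \<in> Ploc. Rest z \<pi> = q}"

lemma space_Ploc_M: "space Ploc_M = Ploc"
  unfolding Ploc_M_def by (simp add: space_measure_of_conv)

lemma sets_Ploc_M:
  "sets Ploc_M = sigma_sets Ploc {cylinder z q | z q. finite z \<and> z \<subseteq> {0..} \<and> q \<in> Parts z}"
  unfolding Ploc_M_def cylinder_def Parts_def by (subst sets_measure_of) auto

lemma cylinder_empty: "z \<subseteq> {0..} \<Longrightarrow> q \<notin> Parts z \<Longrightarrow> cylinder z q = {}"
  using Rest_in_Parts by (auto simp: cylinder_def)

lemma cylinder_in_sets: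
  assumes "finite z" "z \<subseteq> {0..}"
  shows "cylinder z q \<in> sets Ploc_M"
  using assms cylinder_empty[OF assms(2)] unfolding sets_Ploc_M
  by (cases "q \<in> Parts z") (auto intro: sigma_sets.Empty)

lemma Rest_vimage_eq_Union_cylinder:
  assumes "z \<subseteq> {0..}"
  shows "{\<pi> \<in> Ploc. Rest z \<pi> \<in> A} = (\<Union>q\<in>A \<inter> Parts z. cylinder z q)"
  using Rest_in_Parts[OF _ assms] by (auto simp: cylinder_def)

lemma measurable_Rest:
  assumes "finite z" "z \<subseteq> {0..}"
  shows "Rest z \<in> measurable Ploc_M (count_space (Parts z))"
proof (rule measurableI)
  fix A
  have "Rest z -` A \<inter> space Ploc_M = (\<Union>q\<in>A \<inter> Parts z. cylinder z q)"
    using Rest_vimage_eq_Union_cylinder[OF assms(2)] by (auto simp: space_Ploc_M)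
  then show "Rest z -` A \<inter> space Ploc_M \<in> sets Ploc_M"
    using assms finite_Parts[OF assms(1)] cylinder_in_sets by auto
qed (use assms Rest_in_Parts in \<open>auto simp: space_Ploc_M\<close>)

definition cylinder_sets :: "real set set set set" where
  "cylinder_sets = {{\<pi> \<in> Ploc. Rest z \<pi> \<in> A} | z A. finite z \<and> z \<subseteq> {0..}}"

lemma Int_stable_cylinder_sets: "Int_stable cylinder_sets"
proof (rule Int_stableI)
  fix a b assume "a \<in> cylinder_sets" "b \<in> cylinder_sets"
  then obtain z1 A1 z2 A2 where a: "a = {\<pi> \<in> Ploc. Rest z1 \<pi> \<in> A1}" "finite z1" "z1 \<subseteq> {0..}"
    and b: "b = {\<pi> \<in> Ploc. Rest z2 \<pi> \<in> A2}" "finite z2" "z2 \<subseteq> {0..}"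
    unfolding cylinder_sets_def by blast
  have "a \<inter> b = {\<pi> \<in> Ploc. Rest (z1 \<union> z2) \<pi> \<in> {q. Rest z1 q \<in> A1 \<and> Rest z2 q \<in> A2}}"
    using a b by (auto simp: Rest_Rest)
  then show "a \<inter> b \<in> cylinder_sets" using a b unfolding cylinder_sets_def by blast
qed

lemma sets_Ploc_M_cylinder_sets: "sets Ploc_M = sigma_sets Ploc cylinder_sets"
  unfolding sets_Ploc_M
proof (rule sigma_sets_eqI)
  fix a assume "a \<in> cylinder_sets"
  then obtain z A where "a = (\<Union>q\<in>A \<inter> Parts z. cylinder z q)" "finite z" "z \<subseteq> {0..}"
    unfolding cylinder_sets_def using Rest_vimage_eq_Union_cylinder by blast
  then have "a \<in> sets Ploc_M"
    using finite_Parts cylinder_in_sets by auto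
  then show "a \<in> sigma_sets Ploc {cylinder z q | z q. finite z \<and> z \<subseteq> {0..} \<and> q \<in> Parts z}"
    unfolding sets_Ploc_M .
next
  fix b assume "b \<in> {cylinder z q | z q. finite z \<and> z \<subseteq> {0..} \<and> q \<in> Parts z}"
  then obtain z q where "b = {\<pi> \<in> Ploc. Rest z \<pi> \<in> {q}}" "finite z" "z \<subseteq> {0..}"
    unfolding cylinder_def by auto
  then show "b \<in> sigma_sets Ploc cylinder_sets" unfolding cylinder_sets_def by blast
qed

lemma measure_Union_cylinder:
  assumes "finite_measure N" "sets N = sets Ploc_M" "finite z" "z \<subseteq> {0..}"
  shows "measure N (\<Union>q\<in>A \<inter> Parts z. cylinder z q) = (\<Sum>q\<in>A \<inter> Parts z. measure N (cylinder z q))"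
proof (rule finite_measure.finite_measure_finite_Union[OF assms(1)])
  show "finite (A \<inter> Parts z)" using finite_Parts[OF assms(3)] by simp
  show "cylinder z ` (A \<inter> Parts z) \<subseteq> sets N"
    using cylinder_in_sets[OF assms(3,4)] assms(2) by auto
  show "disjoint_family_on (cylinder z) (A \<inter> Parts z)"
    by (auto simp: disjoint_family_on_def cylinder_def)
qed

lemma measure_eqI_cylinder:
  assumes "finite_measure N1" "finite_measure N2"
    and "sets N1 = sets Ploc_M" "sets N2 = sets Ploc_M"
    and eq: "\<And>z q. finite z \<Longrightarrow> z \<subseteq> {0..} \<Longrightarrow> q \<in> Parts z \<Longrightarrow>
       measure N1 (cylinder z q) = measure N2 (cylinder z q)"
  shows "N1 = N2"
proof (rule measure_eqI_generator_eq_countable[where E = cylinder_sets and \<Omega> = Ploc and A = "{Ploc}"])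
  show "Int_stable cylinder_sets" by (rule Int_stable_cylinder_sets)
  show "cylinder_sets \<subseteq> Pow Ploc" unfolding cylinder_sets_def by auto
  show "sets N1 = sigma_sets Ploc cylinder_sets" "sets N2 = sigma_sets Ploc cylinder_sets"
    using assms(3,4) by (simp_all add: sets_Ploc_M_cylinder_sets)
  have "Ploc = {\<pi> \<in> Ploc. Rest {} \<pi> \<in> UNIV}" by auto
  then show "{Ploc} \<subseteq> cylinder_sets" unfolding cylinder_sets_def by blast
  show "\<Union> {Ploc} = Ploc" "countable {Ploc}" by auto
  show "\<And>a. a \<in> {Ploc} \<Longrightarrow> emeasure N1 a \<noteq> \<infinity>"
    using finite_measure.emeasure_finite[OF assms(1)] by auto
  fix C assume "C \<in> cylinder_sets"
  then obtain z A where C: "C = (\<Union>q\<in>A \<inter> Parts z. cylinder z q)" "finite z" "z \<subseteq> {0..}"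
    unfolding cylinder_sets_def using Rest_vimage_eq_Union_cylinder by blast
  then have "measure N1 C = measure N2 C"
    using assms eq by (simp add: measure_Union_cylinder)
  then show "emeasure N1 C = emeasure N2 C"
    using assms(1,2) by (simp add: finite_measure.emeasure_eq_measure)
qed

lemma measure_distr_Rest:
  assumes "sets N = sets Ploc_M" "finite z" "z \<subseteq> {0..}" "q \<in> Parts z"
  shows "measure (distr N (count_space (Parts z)) (Rest z)) {q} = measure N (cylinder z q)"
proof -
  have "Rest z \<in> measurable N (count_space (Parts z))"
    using measurable_Rest[OF assms(2,3)] measurable_cong_sets[OF assms(1) refl] by blast
  moreover have "Rest z -` {q} \<inter> space N = cylinder z q"
    using sets_eq_imp_space_eq[OF assms(1)] by (auto simp: space_Ploc_M cylinder_def)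
  ultimately show ?thesis
    using assms(4) by (subst measure_distr) auto
qed

lemma vimage_cylinder:
  assumes "Y \<in> measurable M Ploc_M"
  shows "Y -` cylinder z q \<inter> space M = {\<omega> \<in> space M. Rest z (Y \<omega>) = q}"
  using measurable_space[OF assms] by (auto simp: cylinder_def space_Ploc_M)

lemma Rest_eq_in_sets:
  assumes "Y \<in> measurable M Ploc_M" "finite z" "z \<subseteq> {0..}"
  shows "{\<omega> \<in> space M. Rest z (Y \<omega>) = q} \<in> sets M"
  using measurable_sets[OF assms(1) cylinder_in_sets[OF assms(2,3)]] vimage_cylinder[OF assms(1)]
  by simp

lemma measure_distr_cylinder:
  assumes "Y \<in> measurable M Ploc_M" "finite z" "z \<subseteq> {0..}"
  shows "measure (distr M Ploc_M Y) (cylinder z q) = measure M {\<omega> \<in> space M. Rest z (Y \<omega>) = q}"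
  using measure_distr[OF assms(1) cylinder_in_sets[OF assms(2,3)]] vimage_cylinder[OF assms(1)]
  by simp

lemma partitioning_process_measurable:
  "is_partitioning_process \<rho> M X \<Longrightarrow> t \<ge> 0 \<Longrightarrow> X t \<in> measurable M Ploc_M"
  unfolding is_partitioning_process_def by (elim conjE) simp

lemma partitioning_process_transition:
  assumes X: "is_partitioning_process \<rho> M X"
    and z: "finite z" "z \<subseteq> {0..}" and "t \<ge> 0" "p \<in> Parts z" "q \<in> Parts z"
  shows "measure M {\<omega> \<in> space M. Rest z (X 0 \<omega>) = p \<and> Rest z (X t \<omega>) = q}
    = measure M {\<omega> \<in> space M. Rest z (X 0 \<omega>) = p} * ARG_P \<rho> z t p q"
proof -
  let ?ts = "\<lambda>k::nat. if k = 0 then 0 else t"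
  let ?xs = "\<lambda>k::nat. if k = 0 then p else q"
  note finite_dim_laws = X[unfolded is_partitioning_process_def,
      THEN conjunct2, THEN conjunct2, THEN conjunct2, rule_format, OF conjI[OF z]]
  have "measure M {\<omega> \<in> space M. \<forall>k\<le>Suc 0. Rest z (X (?ts k) \<omega>) = ?xs k}
      = measure M {\<omega> \<in> space M. Rest z (X 0 \<omega>) = ?xs 0}
        * (\<Prod>k<Suc 0. ARG_P \<rho> z (?ts (Suc k) - ?ts k) (?xs k) (?xs (Suc k)))"
    using assms(4-6) by (intro finite_dim_laws[of ?ts "Suc 0" ?xs]) (auto simp: le_Suc_eq)
  moreover have "(\<forall>k\<le>Suc 0. Rest z (X (?ts k) \<omega>) = ?xs k)
      \<longleftrightarrow> Rest z (X 0 \<omega>) = p \<and> Rest z (X t \<omega>) = q" for \<omega>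
    by (auto simp: le_Suc_eq)
  ultimately show ?thesis by simp
qed

lemma partitioning_process_forward_equation:
  assumes X: "is_partitioning_process \<rho> M X"
    and z: "finite z" "z \<subseteq> {0..}" and t: "t \<ge> 0" and q: "q \<in> Parts z"
  shows "measure M {\<omega> \<in> space M. Rest z (X t \<omega>) = q}
    = (\<Sum>p\<in>Parts z. measure M {\<omega> \<in> space M. Rest z (X 0 \<omega>) = p} * ARG_P \<rho> z t p q)"
proof -
  define A where "A p = {\<omega> \<in> space M. Rest z (X 0 \<omega>) = p \<and> Rest z (X t \<omega>) = q}" for p
  note meas = partitioning_process_measurable[OF X]
  have "{\<omega> \<in> space M. Rest z (X t \<omega>) = q} = (\<Union>p\<in>Parts z. A p)"
    using measurable_space[OF meas[OF order_refl]] Rest_in_Parts z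
    by (auto simp: A_def space_Ploc_M)
  moreover have "measure M (\<Union>p\<in>Parts z. A p) = (\<Sum>p\<in>Parts z. measure M (A p))"
  proof (rule finite_measure.finite_measure_finite_Union)
    show "finite_measure M"
      using X by (simp add: is_partitioning_process_def prob_space.finite_measure)
    have "A p = {\<omega> \<in> space M. Rest z (X 0 \<omega>) = p} \<inter> {\<omega> \<in> space M. Rest z (X t \<omega>) = q}" for p
      by (auto simp: A_def)
    then show "A ` Parts z \<subseteq> sets M"
      using Rest_eq_in_sets[OF meas z] t by auto
  qed (auto simp: finite_Parts[OF z(1)] disjoint_family_on_def A_def)
  ultimately show ?thesis
    using partitioning_process_transition[OF X z t _ q] by (simp add: A_def)
qed

lemma partitioning_process_cylinder_law:
  assumes X: "is_partitioning_process \<rho> M X"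
    and z: "finite z" "z \<subseteq> {0..}" and t: "t \<ge> 0" and q: "q \<in> Parts z"
  shows "measure (distr M Ploc_M (X t)) (cylinder z q)
    = (\<Sum>p\<in>Parts z. measure (distr (distr M Ploc_M (X 0)) (count_space (Parts z)) (Rest z)) {p}
        * ARG_P \<rho> z t p q)"
  using partitioning_process_forward_equation[OF X z t q]
  by (simp add: measure_distr_cylinder[OF partitioning_process_measurable[OF X] z]
      measure_distr_Rest[OF _ z] t)

theorem lemma1:
  fixes \<rho> :: real and \<nu> :: "real set set measure"
    and M :: "'a measure" and X :: "real \<Rightarrow> 'a \<Rightarrow> real set set"
  assumes "\<rho> > 0"
    and "prob_space \<nu>" and "sets \<nu> = sets Ploc_M"
    and "is_partitioning_process \<rho> M X"
    and "distr M Ploc_M (X 0) = \<nu>"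
  shows "(\<forall>t\<ge>0. distr M Ploc_M (X t) = \<nu>) \<longleftrightarrow>
         (\<forall>z. finite z \<and> z \<subseteq> {0..} \<longrightarrow>
              ARG_invariant \<rho> z (distr \<nu> (count_space (Parts z)) (Rest z)))"
proof -
  have invariant_iff: "ARG_invariant \<rho> z (distr \<nu> (count_space (Parts z)) (Rest z)) \<longleftrightarrow>
      (\<forall>t\<ge>0. \<forall>q\<in>Parts z. measure (distr M Ploc_M (X t)) (cylinder z q) = measure \<nu> (cylinder z q))"
    if z: "finite z" "z \<subseteq> {0..}" for z
    using partitioning_process_cylinder_law[OF assms(4) z] assms(5)
    by (simp add: ARG_invariant_def measure_distr_Rest[OF assms(3) z])
  have law_eq_iff: "distr M Ploc_M (X t) = \<nu> \<longleftrightarrow>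
      (\<forall>z q. finite z \<and> z \<subseteq> {0..} \<and> q \<in> Parts z \<longrightarrow>
        measure (distr M Ploc_M (X t)) (cylinder z q) = measure \<nu> (cylinder z q))"
    if t: "t \<ge> 0" for t
  proof (intro iffI allI impI)
    assume "\<forall>z q. finite z \<and> z \<subseteq> {0..} \<and> q \<in> Parts z \<longrightarrow>
        measure (distr M Ploc_M (X t)) (cylinder z q) = measure \<nu> (cylinder z q)"
    moreover have "finite_measure (distr M Ploc_M (X t))"
      using assms(4) t by (intro prob_space.finite_measure prob_space.prob_space_distr
          partitioning_process_measurable) (auto simp: is_partitioning_process_def)
    ultimately show "distr M Ploc_M (X t) = \<nu>"
      using assms(2,3) by (intro measure_eqI_cylinder) (auto intro: prob_space.finite_measure)
  qed simp
  show ?thesis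
    by (auto simp: invariant_iff law_eq_iff)
qed

end
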